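(* Let $n$ be an odd integer $\ge 3$, $F_2$ the free group on $a,b$, and $R_{\mathrm{Heis}_n}$ the kernel of the surjection $F_2\to H_n$ with $a\mapsto\alpha$, $b\mapsto\beta$. Then $R_{\mathrm{Heis}_n}$ is a characteristic subgroup of $F_2$, i.e. $\phi(R_{\mathrm{Heis}_n})=R_{\mathrm{Heis}_n}$ for every $\phi\in\operatorname{Aut}(F_2)$.
   Context: $H_n$ is the group of $3\times3$ upper unitriangular matrices over $\mathbb{Z}/n\mathbb{Z}$; $\alpha$ has entry $1$ at position $(1,2)$ and $\beta$ has entry $1$ at position $(2,3)$, all other off-diagonal entries zero. *)

theory Defs
  imports "HOL-Algebra.Algebra"
begin

text \<open>Generators: False = a, True = b. A letter is (inverted?, generator).
  Elements of F_2 are freely reduced words; multiplication is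
  concatenation followed by free reduction.\<close>

type_synonym letter = "bool \<times> bool"

definition letter_inv :: "letter \<Rightarrow> letter" where
  "letter_inv l = (\<not> fst l, snd l)"

fun reduce :: "letter list \<Rightarrow> letter list" where
  "reduce [] = []"
| "reduce (x # xs) = (case reduce xs of
       [] \<Rightarrow> [x]
     | y # ys \<Rightarrow> (if y = letter_inv x then ys else x # y # ys))"

fun is_reduced :: "letter list \<Rightarrow> bool" where
  "is_reduced [] = True"
| "is_reduced [x] = True"
| "is_reduced (x # y # ys) = (y \<noteq> letter_inv x \<and> is_reduced (y # ys))"

definition F2 :: "letter list monoid" where
  "F2 = \<lparr> carrier = {w. is_reduced w},
          monoid.mult = (\<lambda>u v. reduce (u @ v)),
          one = [] \<rparr>"

text \<open>The triple (x, y, z) represents the upper unitriangular matrix with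
  entry x at (1,2), y at (2,3), z at (1,3), entries taken in {0..n-1}.
  Matrix multiplication gives (x,y,z)(x',y',z') = (x+x', y+y', z+z'+x*y').\<close>

definition Heis :: "int \<Rightarrow> (int \<times> int \<times> int) monoid" where
  "Heis n = \<lparr> carrier = {(x, y, z). 0 \<le> x \<and> x < n \<and> 0 \<le> y \<and> y < n \<and> 0 \<le> z \<and> z < n},
              monoid.mult = (\<lambda>(x, y, z) (x', y', z').
                        ((x + x') mod n, (y + y') mod n, (z + z' + x * y') mod n)),
              one = (0, 0, 0) \<rparr>"

definition heis_alpha :: "int \<times> int \<times> int" where
  "heis_alpha = (1, 0, 0)"

definition heis_beta :: "int \<times> int \<times> int" where
  "heis_beta = (0, 1, 0)"

definition letter_img :: "int \<Rightarrow> letter \<Rightarrow> int \<times> int \<times> int" where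
  "letter_img n l = (let g = (if snd l then heis_beta else heis_alpha)
                     in if fst l then inv\<^bsub>Heis n\<^esub> g else g)"

definition heis_hom :: "int \<Rightarrow> letter list \<Rightarrow> int \<times> int \<times> int" where
  "heis_hom n w = foldr (\<lambda>l acc. letter_img n l \<otimes>\<^bsub>Heis n\<^esub> acc) w \<one>\<^bsub>Heis n\<^esub>"

definition R_Heis :: "int \<Rightarrow> letter list set" where
  "R_Heis n = kernel F2 (Heis n) (heis_hom n)"

end

theory Submission
  imports Defs
begin

text \<open>The kernel \<open>R\<close> of \<open>\<pi> : F\<^sub>2 \<rightarrow> H\<^sub>n\<close> is even fully invariant. For odd \<open>n\<close> every
  assignment \<open>\<alpha> \<mapsto> g, \<beta> \<mapsto> h\<close> extends to an endomorphism \<open>\<theta>\<close> of \<open>H\<^sub>n\<close>. Given an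
  endomorphism \<open>\<psi>\<close> of \<open>F\<^sub>2\<close>, take \<open>g = \<pi>(\<psi> a)\<close> and \<open>h = \<pi>(\<psi> b)\<close>: then \<open>\<pi> \<circ> \<psi>\<close> and
  \<open>\<theta> \<circ> \<pi>\<close> agree on the generators, hence everywhere, so \<open>\<psi>\<close> maps \<open>R\<close> into \<open>R\<close>.
  Applying this to an automorphism and to its inverse gives equality.\<close>

definition reduced_cons :: "letter \<Rightarrow> letter list \<Rightarrow> letter list" where
  "reduced_cons x ys = (case ys of
       [] \<Rightarrow> [x]
     | y # ys' \<Rightarrow> (if y = letter_inv x then ys' else x # y # ys'))"

lemma reduce_Cons [simp]: "reduce (x # xs) = reduced_cons x (reduce xs)"
  by (simp add: reduced_cons_def)

declare reduce.simps(2) [simp del]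

lemma letter_inv_inv [simp]: "letter_inv (letter_inv x) = x"
  by (simp add: letter_inv_def)

lemma is_reduced_Cons_iff:
  "is_reduced (x # ys) \<longleftrightarrow> is_reduced ys \<and> (ys = [] \<or> hd ys \<noteq> letter_inv x)"
  by (cases ys) auto

lemma is_reduced_reduced_cons: "is_reduced ys \<Longrightarrow> is_reduced (reduced_cons x ys)"
  by (auto simp: reduced_cons_def is_reduced_Cons_iff split: list.split)

lemma is_reduced_foldr_reduced_cons: "is_reduced r \<Longrightarrow> is_reduced (foldr reduced_cons u r)"
  by (induction u) (simp_all add: is_reduced_reduced_cons)

lemma reduce_append: "reduce (u @ v) = foldr reduced_cons u (reduce v)"
  by (induction u) simp_all

lemma is_reduced_reduce: "is_reduced (reduce w)"
  using is_reduced_foldr_reduced_cons[of "[]" w] reduce_append[of w "[]"] by simp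

lemma reduce_reduced: "is_reduced w \<Longrightarrow> reduce w = w"
  by (induction w rule: is_reduced.induct) (auto simp: reduced_cons_def)

lemma reduced_cons_cancel:
  "is_reduced ys \<Longrightarrow> reduced_cons x (reduced_cons (letter_inv x) ys) = ys"
  by (auto simp: reduced_cons_def is_reduced_Cons_iff split: list.split)

lemma foldr_reduced_cons_reduce:
  assumes "is_reduced r" shows "foldr reduced_cons (reduce u) r = foldr reduced_cons u r"
proof (induction u)
  case (Cons x u)
  show ?case
  proof (cases "\<exists>ys. reduce u = letter_inv x # ys")
    case True
    then obtain ys where u: "reduce u = letter_inv x # ys" ..
    have "foldr reduced_cons (reduce (x # u)) r = foldr reduced_cons ys r"
      using u by (simp add: reduce_Cons reduced_cons_def)
    also have "\<dots> = reduced_cons x (reduced_cons (letter_inv x) (foldr reduced_cons ys r))"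
      using assms by (simp add: reduced_cons_cancel is_reduced_foldr_reduced_cons)
    also have "\<dots> = foldr reduced_cons (x # u) r"
      using Cons.IH u by simp
    finally show ?thesis .
  next
    case False
    then have "reduce (x # u) = x # reduce u"
      by (auto simp: reduce_Cons reduced_cons_def split: list.split)
    then show ?thesis using Cons.IH by simp
  qed
qed simp

lemma reduce_append_reduce_left: "reduce (reduce u @ v) = reduce (u @ v)"
  by (simp add: reduce_append foldr_reduced_cons_reduce is_reduced_reduce)

lemma reduce_append_reduce_right: "reduce (u @ reduce v) = reduce (u @ v)"
  by (simp add: reduce_append reduce_reduced is_reduced_reduce)

definition word_inv :: "letter list \<Rightarrow> letter list" where
  "word_inv w = rev (map letter_inv w)"

lemma foldr_reduced_cons_word_inv:
  "is_reduced r \<Longrightarrow> foldr reduced_cons (word_inv u) (foldr reduced_cons u r) = r"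
  by (induction u arbitrary: r)
     (simp_all add: word_inv_def reduced_cons_cancel[of _ "letter_inv _", simplified]
        is_reduced_foldr_reduced_cons)

lemma F2_carrier [simp]: "w \<in> carrier F2 \<longleftrightarrow> is_reduced w"
  by (simp add: F2_def)

lemma F2_mult: "u \<otimes>\<^bsub>F2\<^esub> v = reduce (u @ v)"
  by (simp add: F2_def)

lemma F2_one: "\<one>\<^bsub>F2\<^esub> = []"
  by (simp add: F2_def)

lemma group_F2: "group F2"
proof (rule groupI)
  fix u v w :: "letter list"
  show "u \<otimes>\<^bsub>F2\<^esub> v \<otimes>\<^bsub>F2\<^esub> w = u \<otimes>\<^bsub>F2\<^esub> (v \<otimes>\<^bsub>F2\<^esub> w)"
    by (simp add: F2_mult reduce_append_reduce_left reduce_append_reduce_right)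
  assume w: "w \<in> carrier F2"
  then show "\<one>\<^bsub>F2\<^esub> \<otimes>\<^bsub>F2\<^esub> w = w"
    by (simp add: F2_mult F2_one reduce_reduced)
  have "reduce (word_inv w) \<otimes>\<^bsub>F2\<^esub> w = \<one>\<^bsub>F2\<^esub>"
    using w foldr_reduced_cons_word_inv[of "[]" w] reduce_append[of w "[]"]
    by (simp add: F2_mult F2_one reduce_append foldr_reduced_cons_reduce reduce_reduced)
  then show "\<exists>v\<in>carrier F2. v \<otimes>\<^bsub>F2\<^esub> w = \<one>\<^bsub>F2\<^esub>"
    using is_reduced_reduce by auto
qed (simp_all add: F2_mult F2_one is_reduced_reduce)

lemma F2_mult_Cons: "is_reduced (x # w) \<Longrightarrow> [x] \<otimes>\<^bsub>F2\<^esub> w = x # w"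
  by (metis F2_mult append_Cons append_Nil reduce_reduced)

lemma F2_inv_letter: "inv\<^bsub>F2\<^esub> [(False, b)] = [(True, b)]"
proof -
  interpret F2: group F2 by (rule group_F2)
  show ?thesis
    by (rule F2.inv_equality) (simp_all add: F2_mult F2_one reduced_cons_def letter_inv_def)
qed

lemma F2_hom_eqI:
  assumes "group G" and f: "f \<in> hom F2 G" and f': "f' \<in> hom F2 G"
    and generators: "\<And>b. f [(False, b)] = f' [(False, b)]"
    and "w \<in> carrier F2"
  shows "f w = f' w"
proof -
  interpret f: group_hom F2 G f
    using group_F2 assms(1) f by (simp add: group_hom_def group_hom_axioms_def)
  interpret f': group_hom F2 G f'
    using group_F2 assms(1) f' by (simp add: group_hom_def group_hom_axioms_def)
  have letters: "f [l] = f' [l]" for l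
  proof (cases l)
    case (Pair i b)
    have "f [(True, b)] = f' [(True, b)]"
      using generators[of b] by (simp flip: F2_inv_letter)
    then show ?thesis using generators[of b] Pair by (cases i) simp_all
  qed
  have "is_reduced w" using assms(5) by simp
  then show ?thesis
  proof (induction w)
    case Nil
    then show ?case using f.hom_one f'.hom_one by (simp add: F2_one)
  next
    case (Cons x w)
    then have "is_reduced w" by (simp add: is_reduced_Cons_iff)
    then show ?case
      using Cons letters[of x] f.hom_mult[of "[x]" w] f'.hom_mult[of "[x]" w]
      by (simp add: F2_mult_Cons)
  qed
qed

definition F2_lift :: "('g, 'm) monoid_scheme \<Rightarrow> (letter \<Rightarrow> 'g) \<Rightarrow> letter list \<Rightarrow> 'g" where
  "F2_lift G e w = foldr (\<lambda>l acc. e l \<otimes>\<^bsub>G\<^esub> acc) w \<one>\<^bsub>G\<^esub>"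

lemma F2_lift_Nil [simp]: "F2_lift G e [] = \<one>\<^bsub>G\<^esub>"
  by (simp add: F2_lift_def)

lemma F2_lift_Cons [simp]: "F2_lift G e (l # w) = e l \<otimes>\<^bsub>G\<^esub> F2_lift G e w"
  by (simp add: F2_lift_def)

lemma F2_lift_hom:
  assumes "group G" and e: "\<And>l. e l \<in> carrier G"
    and e_inv: "\<And>l. e (letter_inv l) = inv\<^bsub>G\<^esub> e l"
  shows "F2_lift G e \<in> hom F2 G"
proof -
  interpret G: group G by (rule assms(1))
  have closed: "F2_lift G e w \<in> carrier G" for w
    by (induction w) (simp_all add: e)
  have append: "F2_lift G e (u @ v) = F2_lift G e u \<otimes>\<^bsub>G\<^esub> F2_lift G e v" for u v
    by (induction u) (simp_all add: e closed G.m_assoc)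
  have reduced_cons: "F2_lift G e (reduced_cons x w) = e x \<otimes>\<^bsub>G\<^esub> F2_lift G e w" for x w
  proof (cases "\<exists>w'. w = letter_inv x # w'")
    case True
    then obtain w' where "w = letter_inv x # w'" ..
    then show ?thesis
      by (simp add: reduced_cons_def e e_inv closed G.m_assoc[symmetric])
  qed (auto simp: reduced_cons_def split: list.split)
  have "F2_lift G e (reduce w) = F2_lift G e w" for w
    by (induction w) (simp_all add: reduced_cons)
  then show ?thesis
    by (intro homI) (simp_all add: closed F2_mult append)
qed

lemma Heis_mult:
  "(x, y, z) \<otimes>\<^bsub>Heis n\<^esub> (x', y', z')
    = ((x + x') mod n, (y + y') mod n, (z + z' + x * y') mod n)"
  by (simp add: Heis_def)

lemma Heis_one: "\<one>\<^bsub>Heis n\<^esub> = (0, 0, 0)"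
  by (simp add: Heis_def)

lemma Heis_mult_assoc:
  "(x, y, z) \<otimes>\<^bsub>Heis n\<^esub> (x', y', z') \<otimes>\<^bsub>Heis n\<^esub> (x'', y'', z'')
    = (x, y, z) \<otimes>\<^bsub>Heis n\<^esub> ((x', y', z') \<otimes>\<^bsub>Heis n\<^esub> (x'', y'', z''))"
  unfolding Heis_mult prod.inject
  by (intro conjI mod_eq_dvd_iff[THEN iffD2]; unfold minus_div_mult_eq_mod[symmetric]; Groebner_Basis.algebra)

lemma group_Heis:
  assumes "n > 0" shows "group (Heis n)"
proof (rule groupI)
  show "p \<otimes>\<^bsub>Heis n\<^esub> q \<otimes>\<^bsub>Heis n\<^esub> r = p \<otimes>\<^bsub>Heis n\<^esub> (q \<otimes>\<^bsub>Heis n\<^esub> r)" for p q r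
    using Heis_mult_assoc by (cases p; cases q; cases r) metis
next
  fix p assume "p \<in> carrier (Heis n)"
  then obtain x y z where p: "p = (x, y, z)" and "0 \<le> x" "x < n" "0 \<le> y" "y < n" "0 \<le> z" "z < n"
    by (cases p) (simp add: Heis_def)
  then show "\<one>\<^bsub>Heis n\<^esub> \<otimes>\<^bsub>Heis n\<^esub> p = p"
    by (simp add: Heis_mult Heis_one)
  have "((- x) mod n, (- y) mod n, (x * y - z) mod n) \<otimes>\<^bsub>Heis n\<^esub> p = \<one>\<^bsub>Heis n\<^esub>"
    unfolding p Heis_mult Heis_one prod.inject
    by (intro conjI dvd_imp_mod_0; unfold minus_div_mult_eq_mod[symmetric]; Groebner_Basis.algebra)
  then show "\<exists>q\<in>carrier (Heis n). q \<otimes>\<^bsub>Heis n\<^esub> p = \<one>\<^bsub>Heis n\<^esub>"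
    by (rule bexI) (use assms in \<open>simp add: Heis_def\<close>)
qed (use assms in \<open>auto simp: Heis_def\<close>)

lemma heis_alpha_beta_in_carrier:
  assumes "n > 1" shows "heis_alpha \<in> carrier (Heis n)" "heis_beta \<in> carrier (Heis n)"
  using assms by (simp_all add: heis_alpha_def heis_beta_def Heis_def)

lemma heis_hom_eq_F2_lift: "heis_hom n = F2_lift (Heis n) (letter_img n)"
  by (simp add: heis_hom_def F2_lift_def fun_eq_iff)

lemma heis_hom_hom:
  assumes "n > 1" shows "heis_hom n \<in> hom F2 (Heis n)"
proof -
  interpret H: group "Heis n" using assms by (simp add: group_Heis)
  show ?thesis
    unfolding heis_hom_eq_F2_lift
    using heis_alpha_beta_in_carrier[OF assms]
    by (intro F2_lift_hom) (auto simp: letter_img_def letter_inv_def H.is_group)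
qed

lemma heis_hom_generators:
  assumes "n > 1"
  shows "heis_hom n [(False, False)] = heis_alpha" "heis_hom n [(False, True)] = heis_beta"
proof -
  interpret H: group "Heis n" using assms by (simp add: group_Heis)
  show "heis_hom n [(False, False)] = heis_alpha" "heis_hom n [(False, True)] = heis_beta"
    using heis_alpha_beta_in_carrier[OF assms]
    by (simp_all add: heis_hom_eq_F2_lift letter_img_def)
qed

text \<open>Writing \<open>(x, y, z) = \<alpha>\<^sup>x \<beta>\<^sup>y [\<alpha>, \<beta>]\<^bsup>z - x y\<^esup>\<close>, the map below is
  \<open>g\<^sup>x h\<^sup>y [g, h]\<^bsup>z - x y\<^esup>\<close>; the binomial coefficient \<open>x(x - 1)/2\<close> occurring in
  \<open>g\<^sup>x\<close> is taken as \<open>k x (x - 1)\<close> with \<open>k = (n + 1)/2\<close>, the inverse of 2 modulo odd \<open>n\<close>.\<close>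

definition heis_endo ::
  "int \<Rightarrow> int \<times> int \<times> int \<Rightarrow> int \<times> int \<times> int \<Rightarrow> int \<times> int \<times> int \<Rightarrow> int \<times> int \<times> int"
where
  "heis_endo n g h p = (let k = (n + 1) div 2 in
     case (g, h, p) of ((a1, a2, a3), (b1, b2, b3), (x, y, z)) \<Rightarrow>
     ((x * a1 + y * b1) mod n, (x * a2 + y * b2) mod n,
      (x * a3 + k * x * (x - 1) * a1 * a2 + y * b3 + k * y * (y - 1) * b1 * b2 + x * y * a1 * b2
        + (z - x * y) * (a1 * b2 - a2 * b1)) mod n))"

lemma heis_endo_mult:
  assumes "odd n"
  shows "heis_endo n g h (p \<otimes>\<^bsub>Heis n\<^esub> q) = heis_endo n g h p \<otimes>\<^bsub>Heis n\<^esub> heis_endo n g h q"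
proof -
  define k where "k = (n + 1) div 2"
  have n: "n = 2 * k - 1"
    using assms unfolding k_def by presburger
  obtain a1 a2 a3 b1 b2 b3 x y z x' y' z' where
    g: "g = (a1, a2, a3)" and h: "h = (b1, b2, b3)" and p: "p = (x, y, z)" and q: "q = (x', y', z')"
    by (cases g, cases h, cases p, cases q)
  show ?thesis
    unfolding g h p q heis_endo_def Heis_mult Let_def k_def[symmetric] prod.case prod.inject
    apply (intro conjI mod_eq_dvd_iff[THEN iffD2]; unfold minus_div_mult_eq_mod[symmetric])
    subgoal by Groebner_Basis.algebra
    subgoal by Groebner_Basis.algebra
    subgoal unfolding n by Groebner_Basis.algebra
    done
qed

lemma heis_endo_in_carrier: "n > 0 \<Longrightarrow> heis_endo n g h p \<in> carrier (Heis n)"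
  by (cases g, cases h, cases p) (simp add: heis_endo_def Heis_def Let_def)

lemma heis_endo_hom:
  assumes "odd n" and "n > 0" shows "heis_endo n g h \<in> hom (Heis n) (Heis n)"
  using assms by (intro homI) (simp_all add: heis_endo_mult heis_endo_in_carrier)

lemma heis_endo_generators:
  assumes "g \<in> carrier (Heis n)" and "h \<in> carrier (Heis n)"
  shows "heis_endo n g h heis_alpha = g" "heis_endo n g h heis_beta = h"
  using assms by (cases g, cases h, simp add: heis_endo_def heis_alpha_def heis_beta_def Heis_def)+

lemma endo_image_kernel_subset:
  assumes "group H" and "\<psi> \<in> hom G G" and "\<pi> \<in> hom G H" and "\<theta> \<in> hom H H"
    and intertwine: "\<And>x. x \<in> carrier G \<Longrightarrow> \<pi> (\<psi> x) = \<theta> (\<pi> x)"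
  shows "\<psi> ` kernel G H \<pi> \<subseteq> kernel G H \<pi>"
proof -
  interpret \<theta>: group_hom H H \<theta>
    using assms by (simp add: group_hom_def group_hom_axioms_def)
  show ?thesis
    using assms(2) by (auto simp: kernel_def intertwine hom_in_carrier)
qed

lemma iso_image_eq_if_endo_invariant:
  assumes "group G" and \<phi>: "\<phi> \<in> iso G G" and S: "S \<subseteq> carrier G"
    and invariant: "\<And>\<psi>. \<psi> \<in> hom G G \<Longrightarrow> \<psi> ` S \<subseteq> S"
  shows "\<phi> ` S = S"
proof
  show "\<phi> ` S \<subseteq> S" using \<phi> invariant by (simp add: iso_def)
  let ?\<psi> = "inv_into (carrier G) \<phi>"
  have "?\<psi> \<in> hom G G"
    using group.iso_set_sym[OF assms(1) \<phi>] by (simp add: iso_def)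
  then have "\<phi> ` ?\<psi> ` S \<subseteq> \<phi> ` S" using invariant by blast
  moreover have "\<phi> ` ?\<psi> ` S = S"
    using S \<phi> by (force simp: iso_def bij_betw_def f_inv_into_f)
  ultimately show "S \<subseteq> \<phi> ` S" by simp
qed

lemma R_Heis_endo_invariant:
  assumes "odd n" and "n > 1" and \<psi>: "\<psi> \<in> hom F2 F2"
  shows "\<psi> ` R_Heis n \<subseteq> R_Heis n"
proof -
  interpret H: group "Heis n" using assms(2) by (simp add: group_Heis)
  have \<pi>: "heis_hom n \<in> hom F2 (Heis n)" using assms(2) by (rule heis_hom_hom)
  define \<theta> where
    "\<theta> = heis_endo n (heis_hom n (\<psi> [(False, False)])) (heis_hom n (\<psi> [(False, True)]))"
  have \<theta>: "\<theta> \<in> hom (Heis n) (Heis n)"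
    unfolding \<theta>_def using assms by (simp add: heis_endo_hom)
  have "(heis_hom n \<circ> \<psi>) w = (\<theta> \<circ> heis_hom n) w" if "w \<in> carrier F2" for w
  proof (rule F2_hom_eqI[OF H.is_group _ _ _ that])
    show "heis_hom n \<circ> \<psi> \<in> hom F2 (Heis n)" using \<psi> \<pi> by (rule hom_compose)
    show "\<theta> \<circ> heis_hom n \<in> hom F2 (Heis n)" using \<pi> \<theta> by (rule hom_compose)
    have "\<psi> [(False, b)] \<in> carrier F2" for b using hom_in_carrier[OF \<psi>] by simp
    then show "(heis_hom n \<circ> \<psi>) [(False, b)] = (\<theta> \<circ> heis_hom n) [(False, b)]" for b
      using \<pi> assms(2)
      by (cases b) (simp_all add: \<theta>_def heis_hom_generators heis_endo_generators hom_in_carrier)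
  qed
  then show ?thesis
    unfolding R_Heis_def using \<psi> \<pi> \<theta> by (intro endo_image_kernel_subset) simp_all
qed

theorem lemma2p16:
  fixes n :: int and \<phi> :: "letter list \<Rightarrow> letter list"
  assumes "odd n" and "n \<ge> 3"
    and "\<phi> \<in> iso F2 F2"
  shows "\<phi> ` R_Heis n = R_Heis n"
proof (rule iso_image_eq_if_endo_invariant[OF group_F2 assms(3)])
  show "R_Heis n \<subseteq> carrier F2" by (auto simp: R_Heis_def kernel_def)
  show "\<psi> ` R_Heis n \<subseteq> R_Heis n" if "\<psi> \<in> hom F2 F2" for \<psi>
    using assms(1,2) that by (intro R_Heis_endo_invariant) simp_all
qed

end
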